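(* Let $d\ge1$, let $b:\mathbb{R}^d\to\mathbb{R}$ be continuous and bounded, and let $R>0$ be such that (1) $b$ is not constant on $\{x\in\mathbb{R}^d:|x|\le R\}$, and (2) for every $x\in\mathbb{R}^d$ with $|x|>R$ there is $z\in\mathbb{R}^d$ with $|z|\le R$ such that $b(x+y)=b(z+y)$ for all $y\in\mathbb{R}^d$. Then there is $M>0$ such that \[ \inf_{x\in\mathbb{R}^d}\int_{|y|\le M}\int_{|\overline y|\le M}|b(x+y)-b(x+\overline y)|^2\,\mathrm{d}y\,\mathrm{d}\overline y>0. \]
   Context: $|x|$ denotes the Euclidean norm on $\mathbb{R}^d$; integrals are with respect to Lebesgue measure on $\mathbb{R}^d$. *)

theory Defs
  imports "HOL-Analysis.Analysis"
begin

end

theory Submission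
  imports Defs
begin

(* Pick p with |p| <= R and b p ~= b 0. By continuity |b u - b v| >= |b p - b 0| / 2 whenever u and
   v lie in balls of some radius r around p and 0. For |x| <= R these balls, shifted by -x, lie in
   the ball of radius M = 2R + r, so the double integral at x is at least
   (|b p - b 0| / 2)^2 |B_r|^2. The second hypothesis replaces any x by some z with |z| <= R without
   changing the double integral, so this bound is uniform in x. *)

lemma continuous_on_compact_integrable_on:
  fixes f :: "'a::euclidean_space \<Rightarrow> 'b::euclidean_space"
  assumes "continuous_on S f" "compact S"
  shows "f integrable_on S"
proof -
  obtain B where B: "\<And>x. x \<in> S \<Longrightarrow> norm (f x) \<le> B"
    using compact_imp_bounded[OF compact_continuous_image[OF assms]] by (auto simp: bounded_iff)
  show ?thesis
  proof (rule measurable_bounded_by_integrable_imp_integrable)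
    show "f \<in> borel_measurable (lebesgue_on S)"
      using assms by (intro continuous_imp_measurable_on_sets_lebesgue)
        (auto intro: lmeasurable_compact[THEN fmeasurableD])
    show "(\<lambda>_. B) integrable_on S"
      using assms by (simp add: integrable_on_const lmeasurable_compact)
  qed (use B assms in \<open>auto intro: lmeasurable_compact[THEN fmeasurableD]\<close>)
qed

lemma integral_const_lmeasurable:
  assumes "S \<in> lmeasurable"
  shows "integral S (\<lambda>_. c) = c * measure lebesgue S"
  using integral_mult_right[of S c "\<lambda>_. 1"] assms by (simp add: lmeasure_integral)

lemma integral_continuous_on_param_compact:
  fixes f :: "'a::topological_space \<Rightarrow> 'b::euclidean_space \<Rightarrow> 'c::euclidean_space"
  assumes cont: "continuous_on (U \<times> S) (\<lambda>(x, t). f x t)" and S: "compact S"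
  shows "continuous_on U (\<lambda>x. integral S (f x))"
  unfolding continuous_on_def
proof (intro strip tendstoI)
  fix x and e' :: real
  assume "x \<in> U" "e' > 0"
  define e where "e = e' / (measure lebesgue S + 1)"
  have "e > 0" using \<open>e' > 0\<close> by (auto simp: e_def intro!: divide_pos_pos add_nonneg_pos)
  obtain X0 where X0: "x \<in> X0" "open X0"
    and bound: "\<And>y t. y \<in> X0 \<inter> U \<Longrightarrow> t \<in> S \<Longrightarrow> norm (f y t - f x t) \<le> e"
    using continuous_on_prod_compactE[OF cont S \<open>x \<in> U\<close> \<open>e > 0\<close>]
    unfolding split_beta fst_conv snd_conv dist_norm by metis
  have integrable: "f y integrable_on S" if "y \<in> U" for y
  proof (rule continuous_on_compact_integrable_on[OF _ S])
    show "continuous_on S (f y)"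
      using continuous_on_compose2[OF cont continuous_on_Pair[OF continuous_on_const continuous_on_id]]
        that by auto
  qed
  have "\<forall>\<^sub>F y in at x within U. y \<in> X0 \<inter> U"
    using X0 eventually_at_topological by auto
  then show "\<forall>\<^sub>F y in at x within U. dist (integral S (f y)) (integral S (f x)) < e'"
  proof eventually_elim
    case (elim y)
    have "dist (integral S (f y)) (integral S (f x)) = norm (integral S (\<lambda>t. f y t - f x t))"
      using elim \<open>x \<in> U\<close> by (simp add: dist_norm integral_diff integrable)
    also have "\<dots> \<le> e * measure lebesgue S"
      using elim \<open>x \<in> U\<close> S integral_norm_bound_integral[of "\<lambda>t. f y t - f x t" S "\<lambda>_. e"]
      by (auto simp: integrable_on_const lmeasurable_compact integral_const_lmeasurable
               intro!: bound integrable integrable_diff)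
    also have "\<dots> < e'"
      using \<open>e' > 0\<close> \<open>e > 0\<close> by (auto simp: e_def field_split_simps)
    finally show ?case .
  qed
qed

lemma mult_measure_le_integral:
  fixes f :: "'a::euclidean_space \<Rightarrow> real"
  assumes f: "continuous_on S f" and S: "compact S" and A: "compact A" "A \<subseteq> S"
    and lower: "\<And>x. x \<in> A \<Longrightarrow> k \<le> f x" and nonneg: "\<And>x. x \<in> S \<Longrightarrow> 0 \<le> f x"
  shows "k * measure lebesgue A \<le> integral S f"
proof -
  have "k * measure lebesgue A = integral A (\<lambda>_. k)"
    using A by (simp add: integral_const_lmeasurable lmeasurable_compact)
  also have "\<dots> \<le> integral A f"
    using A lower continuous_on_subset[OF f]
    by (intro integral_le) (auto intro: continuous_on_compact_integrable_on
        simp: integrable_on_const lmeasurable_compact)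
  also have "\<dots> \<le> integral S f"
    using A S f nonneg by (intro integral_subset_le) (auto intro: continuous_on_compact_integrable_on
        continuous_on_subset)
  finally show ?thesis .
qed

lemma mult_measure_le_integral_integral:
  fixes h :: "'a::euclidean_space \<Rightarrow> 'a \<Rightarrow> real"
  assumes h: "continuous_on (S \<times> S) (\<lambda>(u, v). h u v)" and S: "compact S"
    and A: "compact A" "A \<subseteq> S" and B: "compact B" "B \<subseteq> S"
    and lower: "\<And>u v. u \<in> A \<Longrightarrow> v \<in> B \<Longrightarrow> k \<le> h u v"
    and nonneg: "\<And>u v. u \<in> S \<Longrightarrow> v \<in> S \<Longrightarrow> 0 \<le> h u v"
  shows "k * measure lebesgue B * measure lebesgue A \<le> integral S (\<lambda>u. integral S (h u))"
proof (rule mult_measure_le_integral[OF _ S A])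
  show "continuous_on S (\<lambda>u. integral S (h u))"
    using h S by (rule integral_continuous_on_param_compact)
  have h_u: "continuous_on S (h u)" if "u \<in> S" for u
    using continuous_on_compose2[OF h continuous_on_Pair[OF continuous_on_const continuous_on_id]]
      that by auto
  show "k * measure lebesgue B \<le> integral S (h u)" if "u \<in> A" for u
    using that A B by (intro mult_measure_le_integral[OF h_u S B] lower nonneg) auto
  show "0 \<le> integral S (h u)" if "u \<in> S" for u
    using that S by (intro integral_nonneg continuous_on_compact_integrable_on[OF h_u] nonneg)
qed

lemma continuous_separates_cballs:
  fixes b :: "'a::metric_space \<Rightarrow> real"
  assumes "isCont b p" "isCont b q"
  obtains r where "r > 0"
    "\<And>u v. u \<in> cball p r \<Longrightarrow> v \<in> cball q r \<Longrightarrow> \<bar>b p - b q\<bar> / 2 \<le> \<bar>b u - b v\<bar>"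
proof (cases "b p = b q")
  case True
  then show ?thesis using that[of 1] by simp
next
  case False
  then have \<epsilon>: "\<bar>b p - b q\<bar> / 4 > 0" by simp
  obtain r1 where r1: "r1 > 0" "\<And>u. dist u p < r1 \<Longrightarrow> \<bar>b u - b p\<bar> < \<bar>b p - b q\<bar> / 4"
    using assms(1) \<epsilon> unfolding continuous_at_eps_delta dist_real_def by blast
  obtain r2 where r2: "r2 > 0" "\<And>v. dist v q < r2 \<Longrightarrow> \<bar>b v - b q\<bar> < \<bar>b p - b q\<bar> / 4"
    using assms(2) \<epsilon> unfolding continuous_at_eps_delta dist_real_def by blast
  show ?thesis
  proof (rule that[of "min r1 r2 / 2"])
    show "min r1 r2 / 2 > 0" using r1 r2 by simp
    fix u v assume "u \<in> cball p (min r1 r2 / 2)" "v \<in> cball q (min r1 r2 / 2)"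
    then have "\<bar>b u - b p\<bar> < \<bar>b p - b q\<bar> / 4" "\<bar>b v - b q\<bar> < \<bar>b p - b q\<bar> / 4"
      using r1 r2 by (auto simp: dist_commute intro!: r1(2) r2(2))
    then show "\<bar>b p - b q\<bar> / 2 \<le> \<bar>b u - b v\<bar>" by (simp add: abs_if split: if_splits)
  qed
qed

lemma sq_diff_double_integral_ge:
  fixes b :: "'a::euclidean_space \<Rightarrow> real"
  assumes b: "continuous_on UNIV b"
    and sep: "\<And>u v. u \<in> cball p r \<Longrightarrow> v \<in> cball q r \<Longrightarrow> d \<le> \<bar>b u - b v\<bar>"
    and "norm (p - x) + r \<le> M" "norm (q - x) + r \<le> M" and "0 \<le> d"
  shows "d\<^sup>2 * measure lebesgue (cball (0::'a) r) * measure lebesgue (cball (0::'a) r)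
    \<le> integral (cball 0 M) (\<lambda>y. integral (cball 0 M) (\<lambda>y'. \<bar>b (x + y) - b (x + y')\<bar>\<^sup>2))"
proof -
  have measure_cball: "measure lebesgue (cball c r) = measure lebesgue (cball (0::'a) r)" for c :: 'a
  proof -
    have "cball c r = (+) c ` cball 0 r"
      using cball_translation[of c 0 r] by simp
    then show ?thesis by (simp only: measure_translation)
  qed
  have "d\<^sup>2 * measure lebesgue (cball (q - x) r) * measure lebesgue (cball (p - x) r)
    \<le> integral (cball 0 M) (\<lambda>y. integral (cball 0 M) (\<lambda>y'. \<bar>b (x + y) - b (x + y')\<bar>\<^sup>2))"
  proof (rule mult_measure_le_integral_integral)
    show "continuous_on (cball 0 M \<times> cball 0 M) (\<lambda>(y, y'). \<bar>b (x + y) - b (x + y')\<bar>\<^sup>2)"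
      by (auto simp: split_beta intro!: continuous_intros continuous_on_compose2[OF b])
    show "d\<^sup>2 \<le> \<bar>b (x + u) - b (x + v)\<bar>\<^sup>2" if "u \<in> cball (p - x) r" "v \<in> cball (q - x) r" for u v
      using that \<open>0 \<le> d\<close> sep[of "x + u" "x + v"]
      by (intro power_mono) (auto simp: dist_norm algebra_simps)
  qed (use assms(3,4) in \<open>simp_all add: cball_subset_cball_iff dist_norm\<close>)
  then show ?thesis
    by (simp only: measure_cball[of "p - x"] measure_cball[of "q - x"])
qed

theorem lemma4p3:
  fixes b :: "'a::euclidean_space \<Rightarrow> real" and R :: real
  assumes cont: "continuous_on UNIV b"
    and bdd: "bounded (range b)"
    and Rpos: "R > 0"
    and noncon: "\<not> (\<exists>c. \<forall>x\<in>cball 0 R. b x = c)"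
    and period: "\<forall>x. norm x > R \<longrightarrow> (\<exists>z. norm z \<le> R \<and> (\<forall>y. b (x + y) = b (z + y)))"
  shows "\<exists>M>0. (INF x. integral (cball 0 M) (\<lambda>y.
            integral (cball 0 M) (\<lambda>y'. \<bar>b (x + y) - b (x + y')\<bar>\<^sup>2))) > 0"
proof -
  obtain p where p: "norm p \<le> R" "b p \<noteq> b 0"
    using noncon mem_cball_0 by blast
  have "isCont b x" for x
    using cont by (simp add: continuous_on_eq_continuous_at)
  then obtain r where r: "r > 0"
    and sep: "\<And>u v. u \<in> cball p r \<Longrightarrow> v \<in> cball 0 r \<Longrightarrow> \<bar>b p - b 0\<bar> / 2 \<le> \<bar>b u - b v\<bar>"
    using continuous_separates_cballs by blast
  define M where "M = 2 * R + r"
  define F where "F x = integral (cball 0 M) (\<lambda>y.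
            integral (cball 0 M) (\<lambda>y'. \<bar>b (x + y) - b (x + y')\<bar>\<^sup>2))" for x
  define c where
    "c = (\<bar>b p - b 0\<bar> / 2)\<^sup>2 * measure lebesgue (cball (0::'a) r) * measure lebesgue (cball (0::'a) r)"
  have "measure lebesgue (cball (0::'a) r) > 0"
    using content_cball_pos[OF r, of 0] by simp
  then have "c > 0"
    using p by (simp add: c_def)
  have near: "c \<le> F x" if "norm x \<le> R" for x
    using sep p that Rpos norm_triangle_ineq4[of p x] unfolding c_def F_def M_def
    by (intro sq_diff_double_integral_ge[OF cont, where p = p and q = 0]) auto
  have "c \<le> F x" for x
  proof (cases "norm x \<le> R")
    case False
    then obtain z where "norm z \<le> R" "\<And>y. b (x + y) = b (z + y)"
      using period by force
    then have "F x = F z" by (simp add: F_def)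
    then show ?thesis using near \<open>norm z \<le> R\<close> by simp
  qed (rule near)
  then have "c \<le> (INF x. F x)"
    by (intro cINF_greatest) auto
  moreover have "M > 0"
    using r Rpos by (simp add: M_def)
  ultimately show ?thesis
    using \<open>c > 0\<close> unfolding F_def by (intro exI[of _ M]) auto
qed

end
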